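(* Let $N\ge1$, $k\in\mathbb{Z}$, $m\in\mathbb{Z}_{>0}$, $\Gamma\in\{\Gamma_0(N),\Gamma_1(N)\}$, and let $\psi\in J^N_{k,\frac mN}(\Gamma)$ be meromorphic with simple poles at $z=z_s=\alpha\tau+\beta$ for $s=(\alpha,\beta)\in S(\psi)\subset\mathbb{Q}^2$. Then $D_{(\alpha+\lambda,\beta+\mu)}(\tau)=\mathbf{e}(\frac mN(\mu\alpha-\lambda\beta))D_{(\alpha,\beta)}(\tau)$ for $(\lambda,\mu)\in N\mathbb{Z}\times\mathbb{Z}$, and $D_s(\frac{a\tau+b}{c\tau+d})=(c\tau+d)^{k-1}D_{s\gamma}(\tau)$ for $\gamma=\begin{pmatrix}a&b\\c&d\end{pmatrix}\in\Gamma$, where $s\gamma=(a\alpha+c\beta,b\alpha+d\beta)$.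
   Context: $\mathbf{e}(t)=e^{2\pi it}$. $\Gamma_0(N)$: $c\equiv0\bmod N$; $\Gamma_1(N)$: also $a\equiv d\equiv1\bmod N$. $J^N_{k,\frac mN}(\Gamma)$: functions $\psi$ on $\mathbb{H}\times\mathbb{C}$ with $\psi(\frac{a\tau+b}{c\tau+d},\frac z{c\tau+d})=(c\tau+d)^k\mathbf{e}(\frac mN\frac{cz^2}{c\tau+d})\psi(\tau,z)$ for $\gamma\in\Gamma$ and $\psi(\tau,z+\lambda\tau+\mu)=\mathbf{e}(-\frac mN(\lambda^2\tau+2\lambda z+\lambda\mu))\psi(\tau,z)$ for $(\lambda,\mu)\in N\mathbb{Z}\times\mathbb{Z}$. $D_s(\tau)=2\pi i\,\mathbf{e}(\frac mN\alpha z_s)\operatorname{Res}_{z=z_s}\psi(\tau,z)$ for $s\in S(\psi)$. *)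

theory Defs
  imports "HOL-Complex_Analysis.Complex_Analysis"
begin

definition ee :: "complex \<Rightarrow> complex" where
  "ee t = exp (2 * of_real pi * \<i> * t)"

text \<open>Integer matrices (a,b,c,d) = [[a,b],[c,d]] of determinant one.\<close>
definition Gamma0 :: "nat \<Rightarrow> (int \<times> int \<times> int \<times> int) set" where
  "Gamma0 N = {(a,b,c,d). a*d - b*c = 1 \<and> int N dvd c}"

definition Gamma1 :: "nat \<Rightarrow> (int \<times> int \<times> int \<times> int) set" where
  "Gamma1 N = {(a,b,c,d). a*d - b*c = 1 \<and> int N dvd c \<and> a mod int N = 1 mod int N \<and> d mod int N = 1 mod int N}"

definition zpt :: "rat \<times> rat \<Rightarrow> complex \<Rightarrow> complex" where
  "zpt s \<tau> = of_rat (fst s) * \<tau> + of_rat (snd s)"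

definition poles :: "(rat \<times> rat) set \<Rightarrow> complex \<Rightarrow> complex set" where
  "poles S \<tau> = {zpt s \<tau> | s. s \<in> S}"

definition Dres :: "(complex \<Rightarrow> complex \<Rightarrow> complex) \<Rightarrow> int \<Rightarrow> nat \<Rightarrow> rat \<times> rat \<Rightarrow> complex \<Rightarrow> complex" where
  "Dres \<psi> m N s \<tau> = 2 * of_real pi * \<i> *
     ee (of_int m / of_nat N * of_rat (fst s) * zpt s \<tau>) * residue (\<psi> \<tau>) (zpt s \<tau>)"

end

(*
  Near a simple pole z_s, psi(tau, .) equals h(z) / (z - z_s) with h analytic, so an identity
  psi(tau', A z) = g(z) psi(tau, z) with A affine and g analytic transports residues: the
  residue of psi(tau', .) at A z_s is g(z_s) times the linear coefficient of A times the residue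
  of psi(tau, .) at z_s. For the elliptic law A is a translation and g the exponential
  factor; for the modular law A z = z / (c tau + d), whose scaling lowers the weight from k to
  k - 1. The normalisation e(m/N alpha z_s) in D_s absorbs the exponential factors: what remains
  is e(m/N (mu alpha - lambda beta)) for the translation and nothing for the modular law, where
  ad - bc = 1 is used.
*)
theory Submission
  imports Defs
begin

lemma ee_add: "ee x * ee y = ee (x + y)"
  unfolding ee_def by (simp add: exp_add[symmetric] algebra_simps)

lemma ee_nonzero: "ee x \<noteq> 0"
  unfolding ee_def by simp

lemma
  assumes "Im \<tau> > 0" "a * d - b * c = (1::int)"
  shows moebius_denominator_nonzero: "of_int c * \<tau> + of_int d \<noteq> 0"
    and Im_moebius_pos: "Im ((of_int a * \<tau> + of_int b) / (of_int c * \<tau> + of_int d)) > 0"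
proof -
  show nz: "of_int c * \<tau> + of_int d \<noteq> 0"
  proof
    assume h: "of_int c * \<tau> + of_int d = 0"
    hence "Im (of_int c * \<tau> + of_int d) = 0" by simp
    hence "c = 0" using assms(1) by simp
    with h assms(2) show False by simp
  qed
  have "Im ((of_int a * \<tau> + of_int b) / (of_int c * \<tau> + of_int d))
      = of_int (a * d - b * c) * Im \<tau> / (cmod (of_int c * \<tau> + of_int d))\<^sup>2"
    by (simp add: Im_divide cmod_power2 algebra_simps)
  then show "Im ((of_int a * \<tau> + of_int b) / (of_int c * \<tau> + of_int d)) > 0"
    using assms nz by simp
qed

lemma eventually_at_divide:
  fixes q j :: "'a::real_normed_field"
  assumes "eventually P (at q)" "j \<noteq> 0"
  shows "eventually (\<lambda>z. P (z / j)) (at (j * q))"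
proof -
  have "filterlim (\<lambda>z. z / j) (at q) (at (j * q))"
    unfolding filterlim_at
  proof (intro conjI)
    have "eventually (\<lambda>z. z \<noteq> j * q) (at (j * q))"
      by (simp add: eventually_at_filter)
    thus "eventually (\<lambda>z. z / j \<in> UNIV \<and> z / j \<noteq> q) (at (j * q))"
      by (rule eventually_mono) (use assms(2) in \<open>auto simp: field_simps\<close>)
  qed (use assms(2) in \<open>auto intro!: tendsto_eq_intros\<close>)
  with assms(1) show ?thesis
    by (rule eventually_compose_filterlim)
qed

lemma residue_shift: "residue f (p + w) = residue (\<lambda>y. f (y + w)) p"
  by (simp add: residue_shift_0[of f] residue_shift_0[of "\<lambda>y. f (y + w)"] add_ac)

lemma residue_eq_if_eventually_simple:
  assumes "h analytic_on {p}" and "eventually (\<lambda>w. f w = h w / (w - p)) (at p)"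
  shows "residue f p = h p"
proof -
  obtain A where "open A" "p \<in> A" "h holomorphic_on A"
    using assms(1) analytic_at by blast
  then have "residue (\<lambda>w. h w / (w - p)) p = h p"
    by (rule residue_simple)
  moreover have "residue f p = residue (\<lambda>w. h w / (w - p)) p"
    using assms(2) by (rule residue_cong) simp
  ultimately show ?thesis by simp
qed

lemma simple_pole_zor_poly:
  assumes "isolated_singularity_at f p" "is_pole f p" "zorder f p = -1"
  shows "zor_poly f p analytic_on {p}"
    and "eventually (\<lambda>w. f w = zor_poly f p w / (w - p)) (at p)"
proof -
  obtain r where "r > 0" "f analytic_on ball p r - {p}"
    using assms(1) by (auto simp: isolated_singularity_at_def)
  then obtain r' where r': "r' > 0" "zor_poly f p holomorphic_on cball p r'"
      "\<forall>w\<in>cball p r' - {p}. f w = zor_poly f p w / (w - p)"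
    using zorder_exist_pole[of f "ball p r" p] assms(2,3) analytic_imp_holomorphic by force
  show "zor_poly f p analytic_on {p}"
    unfolding analytic_at using r' by (intro exI[of _ "ball p r'"]) auto
  have "eventually (\<lambda>w. w \<in> ball p r' - {p}) (at p)"
    using r'(1) by (intro eventually_at_in_open) auto
  then show "eventually (\<lambda>w. f w = zor_poly f p w / (w - p)) (at p)"
    by (rule eventually_mono) (use r'(3) in auto)
qed

lemma residue_scaled_simple_pole:
  assumes "isolated_singularity_at f q" "is_pole f q" "zorder f q = -1"
    and "j \<noteq> 0" "g analytic_on {j * q}"
    and "eventually (\<lambda>z. F z = g z * f (z / j)) (at (j * q))"
  shows "residue F (j * q) = j * g (j * q) * residue f q"
proof -
  let ?h = "zor_poly f q"
  have "eventually (\<lambda>z. f (z / j) = ?h (z / j) / (z / j - q)) (at (j * q))"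
    using simple_pole_zor_poly(2)[OF assms(1-3)] assms(4) by (rule eventually_at_divide)
  with assms(6) have "eventually (\<lambda>z. F z = j * g z * ?h (z / j) / (z - j * q)) (at (j * q))"
    by eventually_elim (use assms(4) in \<open>simp add: field_simps\<close>)
  moreover have "(\<lambda>z. j * g z * ?h (z / j)) analytic_on {j * q}"
  proof -
    have "(?h \<circ> (\<lambda>z. z / j)) analytic_on {j * q}"
      by (rule analytic_on_compose)
         (use simple_pole_zor_poly(1)[OF assms(1-3)] assms(4) in \<open>auto intro!: analytic_intros\<close>)
    then show ?thesis
      using assms(5) by (auto simp: o_def intro!: analytic_intros)
  qed
  ultimately have "residue F (j * q) = j * g (j * q) * ?h q"
    using residue_eq_if_eventually_simple assms(4) by fastforce
  with residue_simple_pole[OF assms(1-3)] show ?thesis by simp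
qed

lemma residue_translate_simple_pole:
  assumes "isolated_singularity_at f p" "is_pole f p" "zorder f p = -1"
    and "G analytic_on {p}" "eventually (\<lambda>y. f (y + w) = G y * f y) (at p)"
  shows "residue f (p + w) = G p * residue f p"
proof -
  have "residue f (p + w) = residue (\<lambda>y. f (y + w)) (1 * p)"
    by (simp add: residue_shift)
  also have "\<dots> = 1 * G (1 * p) * residue f p"
    by (rule residue_scaled_simple_pole) (use assms in simp_all)
  finally show ?thesis by simp
qed

locale simple_pole_family =
  fixes \<psi> :: "complex \<Rightarrow> complex \<Rightarrow> complex" and S :: "(rat \<times> rat) set"
  assumes meromorphic: "\<And>\<tau>. Im \<tau> > 0 \<Longrightarrow> \<psi> \<tau> meromorphic_on UNIV"
    and pole_set: "\<And>\<tau>. Im \<tau> > 0 \<Longrightarrow> {z. is_pole (\<psi> \<tau>) z} = poles S \<tau>"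
    and zorder_poles: "\<And>\<tau> z. Im \<tau> > 0 \<Longrightarrow> z \<in> poles S \<tau> \<Longrightarrow> zorder (\<psi> \<tau>) z = -1"
begin

lemma isolated_singularity:
  assumes "Im \<tau> > 0"
  shows "isolated_singularity_at (\<psi> \<tau>) p"
  using meromorphic_on_subset[OF meromorphic[OF assms], of "{p}"]
  by (simp add: meromorphic_on_isolated_singularity)

lemma eventually_not_in_poles:
  assumes "Im \<tau> > 0"
  shows "eventually (\<lambda>z. z \<notin> poles S \<tau>) (at p)"
  using eventually_not_pole[OF isolated_singularity[OF assms]]
  by (rule eventually_mono) (use pole_set[OF assms] in blast)

lemma
  assumes "s \<in> S" "Im \<tau> > 0"
  shows is_pole_zpt: "is_pole (\<psi> \<tau>) (zpt s \<tau>)"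
    and zorder_zpt: "zorder (\<psi> \<tau>) (zpt s \<tau>) = -1"
proof -
  have "zpt s \<tau> \<in> poles S \<tau>"
    using assms(1) unfolding poles_def by blast
  then show "is_pole (\<psi> \<tau>) (zpt s \<tau>)" "zorder (\<psi> \<tau>) (zpt s \<tau>) = -1"
    using pole_set[OF assms(2)] zorder_poles[OF assms(2)] by auto
qed

lemma Dres_translate:
  assumes "(\<alpha>, \<beta>) \<in> S" "Im \<tau> > 0"
    and elliptic: "\<And>z. z \<notin> poles S \<tau> \<Longrightarrow>
        \<psi> \<tau> (z + of_int l * \<tau> + of_int u)
        = ee (- (of_int m / of_nat N) * (of_int l ^ 2 * \<tau> + 2 * of_int l * z + of_int l * of_int u)) * \<psi> \<tau> z"
  shows "Dres \<psi> m N (\<alpha> + of_int l, \<beta> + of_int u) \<tau>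
       = ee (of_int m / of_nat N * (of_int u * of_rat \<alpha> - of_int l * of_rat \<beta>)) * Dres \<psi> m N (\<alpha>, \<beta>) \<tau>"
proof -
  define x where "x = (of_int m / of_nat N :: complex)"
  define p where "p = zpt (\<alpha>, \<beta>) \<tau>"
  define w where "w = of_int l * \<tau> + (of_int u :: complex)"
  define G where "G = (\<lambda>y. ee (- x * (of_int l ^ 2 * \<tau> + 2 * of_int l * y + of_int l * of_int u)))"
  have "eventually (\<lambda>y. \<psi> \<tau> (y + w) = G y * \<psi> \<tau> y) (at p)"
    using eventually_not_in_poles[OF assms(2)]
  proof eventually_elim
    case (elim y)
    from elliptic[OF elim] show ?case
      by (simp add: G_def w_def x_def add.assoc)
  qed
  moreover have "G analytic_on {p}"
    unfolding G_def ee_def by (intro analytic_intros)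
  ultimately have res: "residue (\<psi> \<tau>) (p + w) = G p * residue (\<psi> \<tau>) p"
    using residue_translate_simple_pole isolated_singularity is_pole_zpt zorder_zpt assms(1,2)
    unfolding p_def by blast
  have zpt: "zpt (\<alpha> + of_int l, \<beta> + of_int u) \<tau> = p + w"
    by (simp add: zpt_def p_def w_def algebra_simps of_rat_add)
  have exponent: "ee (x * of_rat (\<alpha> + of_int l) * (p + w)) * G p
      = ee (x * (of_int u * of_rat \<alpha> - of_int l * of_rat \<beta>)) * ee (x * of_rat \<alpha> * p)"
    unfolding G_def ee_add
    by (rule arg_cong[where f = ee]) (simp add: p_def w_def zpt_def algebra_simps power2_eq_square of_rat_add)
  show ?thesis
    unfolding Dres_def fst_conv snd_conv zpt res p_def[symmetric] x_def[symmetric]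
    using exponent by (simp add: algebra_simps)
qed

lemma Dres_modular:
  assumes "(\<alpha>, \<beta>) \<in> S" "Im \<tau> > 0" "a * d - b * c = 1"
    and modular: "\<And>z. z \<notin> poles S \<tau> \<Longrightarrow>
        \<psi> ((of_int a * \<tau> + of_int b) / (of_int c * \<tau> + of_int d)) (z / (of_int c * \<tau> + of_int d))
        = (of_int c * \<tau> + of_int d) powi k
          * ee (of_int m / of_nat N * (of_int c * z\<^sup>2 / (of_int c * \<tau> + of_int d))) * \<psi> \<tau> z"
  shows "Dres \<psi> m N (\<alpha>, \<beta>) ((of_int a * \<tau> + of_int b) / (of_int c * \<tau> + of_int d))
       = (of_int c * \<tau> + of_int d) powi (k - 1)
         * Dres \<psi> m N (of_int a * \<alpha> + of_int c * \<beta>, of_int b * \<alpha> + of_int d * \<beta>) \<tau>"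
proof -
  define x where "x = (of_int m / of_nat N :: complex)"
  define j where "j = of_int c * \<tau> + (of_int d :: complex)"
  define \<tau>' where "\<tau>' = (of_int a * \<tau> + of_int b) / j"
  define q where "q = zpt (\<alpha>, \<beta>) \<tau>'"
  define E where "E = (\<lambda>z. ee (x * (of_int c * z\<^sup>2 / j)))"
  have j: "j \<noteq> 0"
    unfolding j_def by (rule moebius_denominator_nonzero[OF assms(2,3)])
  have \<tau>': "Im \<tau>' > 0"
    unfolding \<tau>'_def j_def by (rule Im_moebius_pos[OF assms(2,3)])
  have zpt: "zpt (of_int a * \<alpha> + of_int c * \<beta>, of_int b * \<alpha> + of_int d * \<beta>) \<tau> = j * q"
    unfolding q_def zpt_def \<tau>'_def using j by (simp add: field_simps of_rat_add of_rat_mult j_def)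
  have "eventually (\<lambda>z. \<psi> \<tau> z = inverse (j powi k * E z) * \<psi> \<tau>' (z / j)) (at (j * q))"
    using eventually_not_in_poles[OF assms(2)]
  proof eventually_elim
    case (elim z)
    have "\<psi> \<tau>' (z / j) = j powi k * E z * \<psi> \<tau> z"
      using modular[OF elim] by (simp add: \<tau>'_def j_def E_def x_def)
    then show ?case
      using j ee_nonzero by (simp add: E_def field_simps)
  qed
  moreover have "(\<lambda>z. inverse (j powi k * E z)) analytic_on {j * q}"
    unfolding E_def ee_def using j by (auto intro!: analytic_intros)
  ultimately have res: "residue (\<psi> \<tau>) (j * q) = j * inverse (j powi k * E (j * q)) * residue (\<psi> \<tau>') q"
    using residue_scaled_simple_pole isolated_singularity is_pole_zpt zorder_zpt assms(1) \<tau>' j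
    unfolding q_def by blast
  have exponent: "ee (x * of_rat \<alpha> * q) * E (j * q) = ee (x * of_rat (of_int a * \<alpha> + of_int c * \<beta>) * (j * q))"
  proof -
    have jq: "j * q = of_rat \<alpha> * (of_int a * \<tau> + of_int b) + of_rat \<beta> * j"
      unfolding q_def zpt_def \<tau>'_def using j by (simp add: field_simps)
    have det: "of_int a * of_int d - of_int b * of_int c = (1::complex)"
      by (metis assms(3) of_int_1 of_int_diff of_int_mult)
    have key: "of_rat \<alpha> + of_int c * (j * q) = (of_int a * of_rat \<alpha> + of_int c * of_rat \<beta>) * j"
      using det jq unfolding j_def by algebra
    have "x * of_rat \<alpha> * q + x * (of_int c * (j * q)\<^sup>2 / j) = x * ((of_rat \<alpha> + of_int c * (j * q)) * q)"
      using j by (simp add: power2_eq_square algebra_simps)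
    also have "\<dots> = x * (of_int a * of_rat \<alpha> + of_int c * of_rat \<beta>) * (j * q)"
      unfolding key by (simp add: mult_ac)
    finally show ?thesis
      unfolding E_def ee_add by (simp add: of_rat_add of_rat_mult)
  qed
  show ?thesis
    unfolding Dres_def fst_conv snd_conv zpt res j_def[symmetric] \<tau>'_def[symmetric] q_def[symmetric] x_def[symmetric]
    using j exponent[symmetric] ee_nonzero by (simp add: E_def power_int_diff field_simps)
qed

end

theorem proposition4p3:
  fixes N :: nat and k m :: int
    and \<Gamma> :: "(int \<times> int \<times> int \<times> int) set"
    and \<psi> :: "complex \<Rightarrow> complex \<Rightarrow> complex"
    and S :: "(rat \<times> rat) set"
  assumes N: "N \<ge> 1" and m: "m > 0"
    and Gam: "\<Gamma> = Gamma0 N \<or> \<Gamma> = Gamma1 N"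
    and mero: "\<And>\<tau>. Im \<tau> > 0 \<Longrightarrow> \<psi> \<tau> meromorphic_on UNIV"
    and hol_z: "\<And>\<tau>. Im \<tau> > 0 \<Longrightarrow> \<psi> \<tau> analytic_on (UNIV - poles S \<tau>)"
    and hol_tau: "\<And>z. (\<lambda>\<tau>. \<psi> \<tau> z) holomorphic_on {\<tau>. Im \<tau> > 0 \<and> z \<notin> poles S \<tau>}"
    and pole_set: "\<And>\<tau>. Im \<tau> > 0 \<Longrightarrow> {z. is_pole (\<psi> \<tau>) z} = poles S \<tau>"
    and simple: "\<And>\<tau> z. Im \<tau> > 0 \<Longrightarrow> z \<in> poles S \<tau> \<Longrightarrow> zorder (\<psi> \<tau>) z = -1"
    and modular: "\<And>a b c d \<tau> z. (a,b,c,d) \<in> \<Gamma> \<Longrightarrow> Im \<tau> > 0 \<Longrightarrow> z \<notin> poles S \<tau> \<Longrightarrow>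
        \<psi> ((of_int a * \<tau> + of_int b) / (of_int c * \<tau> + of_int d)) (z / (of_int c * \<tau> + of_int d))
        = (of_int c * \<tau> + of_int d) powi k
          * ee (of_int m / of_nat N * (of_int c * z\<^sup>2 / (of_int c * \<tau> + of_int d))) * \<psi> \<tau> z"
    and elliptic: "\<And>l u \<tau> z. int N dvd l \<Longrightarrow> Im \<tau> > 0 \<Longrightarrow> z \<notin> poles S \<tau> \<Longrightarrow>
        \<psi> \<tau> (z + of_int l * \<tau> + of_int u)
        = ee (- (of_int m / of_nat N) * (of_int l ^ 2 * \<tau> + 2 * of_int l * z + of_int l * of_int u)) * \<psi> \<tau> z"
  shows "(\<forall>\<alpha> \<beta> l u \<tau>. (\<alpha>, \<beta>) \<in> S \<longrightarrow> int N dvd l \<longrightarrow> Im \<tau> > 0 \<longrightarrow>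
            Dres \<psi> m N (\<alpha> + of_int l, \<beta> + of_int u) \<tau>
            = ee (of_int m / of_nat N * (of_int u * of_rat \<alpha> - of_int l * of_rat \<beta>)) * Dres \<psi> m N (\<alpha>, \<beta>) \<tau>)
       \<and> (\<forall>\<alpha> \<beta> a b c d \<tau>. (\<alpha>, \<beta>) \<in> S \<longrightarrow> (a,b,c,d) \<in> \<Gamma> \<longrightarrow> Im \<tau> > 0 \<longrightarrow>
            Dres \<psi> m N (\<alpha>, \<beta>) ((of_int a * \<tau> + of_int b) / (of_int c * \<tau> + of_int d))
            = (of_int c * \<tau> + of_int d) powi (k - 1)
              * Dres \<psi> m N (of_int a * \<alpha> + of_int c * \<beta>, of_int b * \<alpha> + of_int d * \<beta>) \<tau>)"
proof -
  interpret simple_pole_family \<psi> S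
    by unfold_locales (fact mero pole_set simple)+
  have det: "a * d - b * c = 1" if "(a, b, c, d) \<in> \<Gamma>" for a b c d
    using Gam that by (auto simp: Gamma0_def Gamma1_def)
  show ?thesis
    by (intro conjI allI impI Dres_translate Dres_modular elliptic modular det) assumption+
qed

end
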